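(* Let $A_X$ be an irreducible spherical Artin group with cyclic abelianization (i.e. $X$ not of type $\mathbb{B}_m$, $\mathbb{F}_4$ or $\mathbb{I}_2(2k)$), let $0\ne\chi:A_X\to\mathbb{Z}$ be a character and $\mathbb{F}$ a field. Then $\chi(T_X^{X_v})\ne0$ in $\mathbb{F}[t^{\pm1}]$ for every $v\in X$.
   Context: For a finite set $X$ with labels, $A_X$ is the Artin group and $W_X$ its Coxeter group (add $v^2=1$); spherical means $W_X$ finite, irreducible means the graph on $X$ with edges of label $\ge3$ is connected. For $v\in X$, $X_v=X\setminus\{v\}$, and $W_X^{X_v}$ is the set of elements $w\in W_X$ of minimal word length $l(w)$ in their coset $wW_{X_v}$. For $w\in W_X$, its lift $a_w\in A_X$ is the element $v_1\cdots v_r$ for any reduced expression $w=v_1\cdots v_r$ (well defined). Define $\chi(T_X^{X_v})=\sum_{w\in W_X^{X_v}}(-1)^{l(w)}t^{\chi(a_w)}\in\mathbb{F}[t^{\pm1}]$. *)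

theory Defs
  imports "HOL-Algebra.Solvable_Groups" "HOL-Algebra.Elementary_Groups"
    "HOL-Library.Extended_Nat" "HOL-Computational_Algebra.Formal_Laurent_Series"
begin

text \<open>Words in the generators X and their formal inverses; (x, True) is the inverse of x.\<close>
type_synonym 'a word = "('a \<times> bool) list"

inductive pres_rel :: "'a set \<Rightarrow> ('a word \<times> 'a word) set \<Rightarrow> 'a word \<Rightarrow> 'a word \<Rightarrow> bool"
  for X :: "'a set" and R :: "('a word \<times> 'a word) set" where
  refl: "pres_rel X R w w"
| sym: "pres_rel X R w w' \<Longrightarrow> pres_rel X R w' w"
| trans: "pres_rel X R w w' \<Longrightarrow> pres_rel X R w' w'' \<Longrightarrow> pres_rel X R w w''"
| rel: "(l, r) \<in> R \<Longrightarrow> pres_rel X R (u @ l @ v) (u @ r @ v)"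
| cancel: "x \<in> X \<Longrightarrow> pres_rel X R (u @ [(x, b), (x, \<not> b)] @ v) (u @ v)"

definition cls :: "'a set \<Rightarrow> ('a word \<times> 'a word) set \<Rightarrow> 'a word \<Rightarrow> 'a word set" where
  "cls X R w = {w'. pres_rel X R w w'}"

definition pres_group :: "'a set \<Rightarrow> ('a word \<times> 'a word) set \<Rightarrow> 'a word set monoid" where
  "pres_group X R = \<lparr>carrier = {cls X R w | w. set w \<subseteq> X \<times> UNIV},
     monoid.mult = (\<lambda>A B. cls X R ((SOME a. a \<in> A) @ (SOME b. b \<in> B))),
     one = cls X R []\<rparr>"

definition pos :: "'a list \<Rightarrow> 'a word" where
  "pos xs = map (\<lambda>x. (x, False)) xs"

definition alt :: "'a \<Rightarrow> 'a \<Rightarrow> nat \<Rightarrow> 'a list" where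
  "alt u v k = map (\<lambda>i. if even i then u else v) [0..<k]"

section \<open>Artin and Coxeter groups of a labelled set (X, m); label \<infinity> means no relation\<close>

definition coxeter_matrix :: "'a set \<Rightarrow> ('a \<Rightarrow> 'a \<Rightarrow> enat) \<Rightarrow> bool" where
  "coxeter_matrix X m \<longleftrightarrow> (\<forall>u\<in>X. \<forall>v\<in>X. m u v = m v u \<and> (u \<noteq> v \<longrightarrow> m u v \<ge> 2))"

definition artin_rels :: "'a set \<Rightarrow> ('a \<Rightarrow> 'a \<Rightarrow> enat) \<Rightarrow> ('a word \<times> 'a word) set" where
  "artin_rels X m = {(pos (alt u v k), pos (alt v u k)) | u v k.
      u \<in> X \<and> v \<in> X \<and> u \<noteq> v \<and> m u v = enat k}"

definition coxeter_rels :: "'a set \<Rightarrow> ('a \<Rightarrow> 'a \<Rightarrow> enat) \<Rightarrow> ('a word \<times> 'a word) set" where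
  "coxeter_rels X m = artin_rels X m \<union> {(pos [x, x], []) | x. x \<in> X}"

definition artin_group :: "'a set \<Rightarrow> ('a \<Rightarrow> 'a \<Rightarrow> enat) \<Rightarrow> 'a word set monoid" where
  "artin_group X m = pres_group X (artin_rels X m)"

definition coxeter_group :: "'a set \<Rightarrow> ('a \<Rightarrow> 'a \<Rightarrow> enat) \<Rightarrow> 'a word set monoid" where
  "coxeter_group X m = pres_group X (coxeter_rels X m)"

definition cox_elt :: "'a set \<Rightarrow> ('a \<Rightarrow> 'a \<Rightarrow> enat) \<Rightarrow> 'a list \<Rightarrow> 'a word set" where
  "cox_elt X m xs = cls X (coxeter_rels X m) (pos xs)"

definition art_elt :: "'a set \<Rightarrow> ('a \<Rightarrow> 'a \<Rightarrow> enat) \<Rightarrow> 'a list \<Rightarrow> 'a word set" where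
  "art_elt X m xs = cls X (artin_rels X m) (pos xs)"

definition cox_len :: "'a set \<Rightarrow> ('a \<Rightarrow> 'a \<Rightarrow> enat) \<Rightarrow> 'a word set \<Rightarrow> nat" where
  "cox_len X m w = (LEAST n. \<exists>xs. set xs \<subseteq> X \<and> length xs = n \<and> cox_elt X m xs = w)"

definition reduced_expr :: "'a set \<Rightarrow> ('a \<Rightarrow> 'a \<Rightarrow> enat) \<Rightarrow> 'a word set \<Rightarrow> 'a list \<Rightarrow> bool" where
  "reduced_expr X m w xs \<longleftrightarrow> set xs \<subseteq> X \<and> cox_elt X m xs = w \<and> length xs = cox_len X m w"

text \<open>The lift a_w \<in> A_X of w \<in> W_X, via a reduced expression (well defined by Matsumoto).\<close>
definition artin_lift :: "'a set \<Rightarrow> ('a \<Rightarrow> 'a \<Rightarrow> enat) \<Rightarrow> 'a word set \<Rightarrow> 'a word set" where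
  "artin_lift X m w = art_elt X m (SOME xs. reduced_expr X m w xs)"

definition parabolic :: "'a set \<Rightarrow> ('a \<Rightarrow> 'a \<Rightarrow> enat) \<Rightarrow> 'a set \<Rightarrow> 'a word set set" where
  "parabolic X m Y = generate (coxeter_group X m) ((\<lambda>y. cox_elt X m [y]) ` Y)"

definition min_coset_reps :: "'a set \<Rightarrow> ('a \<Rightarrow> 'a \<Rightarrow> enat) \<Rightarrow> 'a set \<Rightarrow> 'a word set set" where
  "min_coset_reps X m Y = {w \<in> carrier (coxeter_group X m).
      \<forall>u \<in> w <#\<^bsub>coxeter_group X m\<^esub> parabolic X m Y. cox_len X m w \<le> cox_len X m u}"

definition chi_T :: "'a set \<Rightarrow> ('a \<Rightarrow> 'a \<Rightarrow> enat) \<Rightarrow> 'a set \<Rightarrow> ('a word set \<Rightarrow> int) \<Rightarrow> 'f::field fls" where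
  "chi_T X m Y \<chi> = (\<Sum>w \<in> min_coset_reps X m Y.
      (-1) ^ cox_len X m w * fls_X_intpow (\<chi> (artin_lift X m w)))"

definition spherical :: "'a set \<Rightarrow> ('a \<Rightarrow> 'a \<Rightarrow> enat) \<Rightarrow> bool" where
  "spherical X m \<longleftrightarrow> finite (carrier (coxeter_group X m))"

definition irreducible :: "'a set \<Rightarrow> ('a \<Rightarrow> 'a \<Rightarrow> enat) \<Rightarrow> bool" where
  "irreducible X m \<longleftrightarrow> (\<forall>u\<in>X. \<forall>v\<in>X.
      (u, v) \<in> {(x, y). x \<in> X \<and> y \<in> X \<and> x \<noteq> y \<and> m x y \<ge> 3}\<^sup>*)"

definition cyclic_abelianization :: "('b, 'c) monoid_scheme \<Rightarrow> bool" where
  "cyclic_abelianization G \<longleftrightarrow> cyclic_group (G Mod derived G (carrier G))"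

end

theory Submission
  imports Defs
begin

(* Since the abelianization of A_X is cyclic, any two characters A_X -> Z are proportional.
   Both the exponent sum and the indicator of a level set of chi on X are characters of A_X:
   the Artin relations only identify generators joined by an odd label, and chi takes equal
   values on those. If chi separated two generators, these two characters would not be
   proportional. Hence chi takes one value c on all of X, c is nonzero as chi is, and
   chi(a_w) = c l(w). In chi(T_X^{X_v}) the exponent 0 therefore occurs only for w = 1, so the
   constant coefficient is 1. *)

lemma pres_rel_append_cong:
  "pres_rel X R w w' \<Longrightarrow> pres_rel X R (p @ w @ q) (p @ w' @ q)"
proof (induction rule: pres_rel.induct)
  case (rel l r u v)
  from pres_rel.rel[OF rel, where u = "p @ u" and v = "v @ q"] show ?case by simp
next
  case (cancel x u b v)
  from pres_rel.cancel[OF cancel, where u = "p @ u" and v = "v @ q"] show ?case by simp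
qed (blast intro: pres_rel.refl pres_rel.sym pres_rel.trans)+

lemma cls_eq_iff: "cls X R w = cls X R w' \<longleftrightarrow> pres_rel X R w w'"
proof
  show "pres_rel X R w w'" if "cls X R w = cls X R w'"
    using that pres_rel.refl[of X R w'] unfolding cls_def by blast
  show "cls X R w = cls X R w'" if "pres_rel X R w w'"
    using that pres_rel.sym pres_rel.trans unfolding cls_def by blast
qed

lemma pres_rel_some_cls: "pres_rel X R w (SOME a. a \<in> cls X R w)"
proof -
  have "w \<in> cls X R w" by (simp add: cls_def pres_rel.refl)
  then have "(SOME a. a \<in> cls X R w) \<in> cls X R w" by (rule someI)
  then show ?thesis by (simp add: cls_def)
qed

lemma pres_group_mult_cls:
  "cls X R w \<otimes>\<^bsub>pres_group X R\<^esub> cls X R w' = cls X R (w @ w')"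
proof -
  let ?a = "SOME a. a \<in> cls X R w" and ?b = "SOME b. b \<in> cls X R w'"
  have "pres_rel X R (w @ w') (?a @ w')"
    using pres_rel_append_cong[OF pres_rel_some_cls, where p = "[]" and q = w'] by simp
  moreover have "pres_rel X R (?a @ w') (?a @ ?b)"
    using pres_rel_append_cong[OF pres_rel_some_cls, where p = ?a and q = "[]"] by simp
  ultimately have "pres_rel X R (?a @ ?b) (w @ w')"
    by (blast intro: pres_rel.sym pres_rel.trans)
  then show ?thesis
    unfolding pres_group_def by (simp add: cls_eq_iff)
qed

lemma pres_group_one: "\<one>\<^bsub>pres_group X R\<^esub> = cls X R []"
  by (simp add: pres_group_def)

lemma carrier_pres_group: "carrier (pres_group X R) = {cls X R w | w. set w \<subseteq> X \<times> UNIV}"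
  by (simp add: pres_group_def)

lemma cls_in_carrier_pres_group: "set w \<subseteq> X \<times> UNIV \<Longrightarrow> cls X R w \<in> carrier (pres_group X R)"
  by (auto simp: carrier_pres_group)

definition inv_word :: "'a word \<Rightarrow> 'a word" where
  "inv_word w = rev (map (\<lambda>(x, b). (x, \<not> b)) w)"

lemma pres_rel_inv_word_append:
  "set w \<subseteq> X \<times> UNIV \<Longrightarrow> pres_rel X R (inv_word w @ w) []"
proof (induction w)
  case Nil
  then show ?case by (simp add: inv_word_def pres_rel.refl)
next
  case (Cons a w)
  obtain x b where a: "a = (x, b)" by (cases a)
  with Cons.prems have "x \<in> X" by auto
  then have "pres_rel X R (inv_word w @ [(x, \<not> b), (x, \<not> \<not> b)] @ w) (inv_word w @ w)"
    by (rule pres_rel.cancel)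
  moreover have "inv_word (a # w) @ a # w = inv_word w @ [(x, \<not> b), (x, \<not> \<not> b)] @ w"
    by (simp add: inv_word_def a)
  ultimately show ?case using Cons by (auto intro: pres_rel.trans)
qed

lemma group_pres_group: "group (pres_group X R)"
proof (rule groupI)
  fix x assume "x \<in> carrier (pres_group X R)"
  then obtain w where w: "set w \<subseteq> X \<times> UNIV" "x = cls X R w"
    by (auto simp: carrier_pres_group)
  then have "cls X R (inv_word w) \<otimes>\<^bsub>pres_group X R\<^esub> x = \<one>\<^bsub>pres_group X R\<^esub>"
    using pres_rel_inv_word_append[OF w(1)] by (simp add: pres_group_mult_cls pres_group_one cls_eq_iff)
  moreover have "cls X R (inv_word w) \<in> carrier (pres_group X R)"
    using w(1) by (intro cls_in_carrier_pres_group) (auto simp: inv_word_def)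
  ultimately show "\<exists>y\<in>carrier (pres_group X R). y \<otimes>\<^bsub>pres_group X R\<^esub> x = \<one>\<^bsub>pres_group X R\<^esub>"
    by blast
next
  fix x y assume "x \<in> carrier (pres_group X R)" "y \<in> carrier (pres_group X R)"
  then obtain w w' where "set w \<subseteq> X \<times> UNIV" "x = cls X R w" "set w' \<subseteq> X \<times> UNIV" "y = cls X R w'"
    by (auto simp: carrier_pres_group)
  then show "x \<otimes>\<^bsub>pres_group X R\<^esub> y \<in> carrier (pres_group X R)"
    using cls_in_carrier_pres_group[of "w @ w'" X R] by (simp add: pres_group_mult_cls)
next
  fix x y z assume "x \<in> carrier (pres_group X R)" "y \<in> carrier (pres_group X R)"
    "z \<in> carrier (pres_group X R)"
  then show "x \<otimes>\<^bsub>pres_group X R\<^esub> y \<otimes>\<^bsub>pres_group X R\<^esub> z =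
       x \<otimes>\<^bsub>pres_group X R\<^esub> (y \<otimes>\<^bsub>pres_group X R\<^esub> z)"
    by (auto simp: carrier_pres_group pres_group_mult_cls)
next
  fix x assume "x \<in> carrier (pres_group X R)"
  then show "\<one>\<^bsub>pres_group X R\<^esub> \<otimes>\<^bsub>pres_group X R\<^esub> x = x"
    by (auto simp: carrier_pres_group pres_group_mult_cls pres_group_one)
qed (auto simp: carrier_pres_group pres_group_one)

definition word_weight :: "('a \<Rightarrow> int) \<Rightarrow> 'a word \<Rightarrow> int" where
  "word_weight f w = (\<Sum>(x, b)\<leftarrow>w. if b then - f x else f x)"

lemma word_weight_simps [simp]:
  "word_weight f [] = 0"
  "word_weight f ((x, b) # w) = (if b then - f x else f x) + word_weight f w"
  "word_weight f (w @ w') = word_weight f w + word_weight f w'"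
  by (auto simp: word_weight_def)

lemma word_weight_pos: "word_weight f (pos xs) = (\<Sum>x\<leftarrow>xs. f x)"
  by (induction xs) (auto simp: pos_def)

lemma word_weight_pres_rel:
  assumes "pres_rel X R w w'" and "\<forall>(l, r) \<in> R. word_weight f l = word_weight f r"
  shows "word_weight f w = word_weight f w'"
  using assms by (induction rule: pres_rel.induct) auto

definition weight_hom :: "('a \<Rightarrow> int) \<Rightarrow> 'a word set \<Rightarrow> int" where
  "weight_hom f S = word_weight f (SOME w. w \<in> S)"

lemma weight_hom_cls:
  assumes "\<forall>(l, r) \<in> R. word_weight f l = word_weight f r"
  shows "weight_hom f (cls X R w) = word_weight f w"
  unfolding weight_hom_def using word_weight_pres_rel[OF pres_rel_some_cls assms] by simp

lemma weight_hom_in_hom: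
  assumes "\<forall>(l, r) \<in> R. word_weight f l = word_weight f r"
  shows "weight_hom f \<in> hom (pres_group X R) integer_group"
  unfolding hom_def carrier_pres_group
  by (auto simp: pres_group_mult_cls weight_hom_cls[OF assms])

lemma hom_integer_group_pres_group_cls:
  assumes \<chi>: "\<chi> \<in> hom (pres_group X R) integer_group" and w: "set w \<subseteq> X \<times> UNIV"
  shows "\<chi> (cls X R w) = word_weight (\<lambda>x. \<chi> (cls X R [(x, False)])) w"
  using w
proof (induction w)
  interpret group_hom "pres_group X R" integer_group \<chi>
    using \<chi> group_pres_group by (simp add: group_hom_def group_hom_axioms_def)
  {
    case Nil
    show ?case using hom_one by (simp add: pres_group_one)
  next
    case (Cons a w)
    obtain x b where a: "a = (x, b)" by (cases a)
    have x: "x \<in> X" using Cons.prems a by auto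
    have gen: "cls X R [(x, c)] \<in> carrier (pres_group X R)" for c
      using x by (intro cls_in_carrier_pres_group) auto
    have "cls X R [(x, True)] \<otimes>\<^bsub>pres_group X R\<^esub> cls X R [(x, False)] = \<one>\<^bsub>pres_group X R\<^esub>"
      using pres_rel.cancel[OF x, where u = "[]" and v = "[]" and b = True]
      by (simp add: pres_group_mult_cls pres_group_one cls_eq_iff)
    then have "\<chi> (cls X R [(x, True)]) + \<chi> (cls X R [(x, False)]) = \<chi> \<one>\<^bsub>pres_group X R\<^esub>"
      by (metis gen hom_mult mult_integer_group)
    then have "\<chi> (cls X R [(x, True)]) = - \<chi> (cls X R [(x, False)])" by simp
    moreover have "cls X R (a # w) = cls X R [a] \<otimes>\<^bsub>pres_group X R\<^esub> cls X R w"
      by (simp add: pres_group_mult_cls)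
    moreover have "cls X R w \<in> carrier (pres_group X R)"
      using Cons.prems by (intro cls_in_carrier_pres_group) auto
    ultimately show ?case using Cons a hom_mult[OF gen] by auto
  }
qed

lemma word_weight_eq_0: "\<forall>x \<in> fst ` set w. f x = 0 \<Longrightarrow> word_weight f w = 0"
  by (induction w) auto

lemma hom_integer_group_pres_group_eq_0:
  assumes "\<chi> \<in> hom (pres_group X R) integer_group"
    and "\<And>x. x \<in> X \<Longrightarrow> \<chi> (cls X R [(x, False)]) = 0"
    and "g \<in> carrier (pres_group X R)"
  shows "\<chi> g = 0"
proof -
  obtain w where w: "set w \<subseteq> X \<times> UNIV" "g = cls X R w"
    using assms(3) by (auto simp: carrier_pres_group)
  have "word_weight (\<lambda>x. \<chi> (cls X R [(x, False)])) w = 0"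
    using w(1) assms(2) by (intro word_weight_eq_0) force
  with w show ?thesis by (simp add: hom_integer_group_pres_group_cls[OF assms(1)])
qed

section \<open>Characters of groups with cyclic abelianization\<close>

lemma hom_integer_group_derived_eq_0:
  assumes "group G" and "f \<in> hom G integer_group" and "d \<in> derived G (carrier G)"
  shows "f d = 0"
proof -
  interpret group_hom G integer_group f
    using assms by (simp add: group_hom_def group_hom_axioms_def)
  have "f ` derived G (carrier G) = derived integer_group (f ` carrier G)"
    by (simp add: derived_img)
  also have "\<dots> = {0}"
    using comm_group.derived_eq_singleton[OF abelian_integer_group] by simp
  finally show ?thesis using assms(3) by blast
qed

lemma cyclic_abelianization_hom_integer_group_multiple:
  fixes G (structure)
  assumes "group G" and "cyclic_abelianization G"
  obtains g where "g \<in> carrier G"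
    and "\<And>h. h \<in> carrier G \<Longrightarrow> \<exists>n::int. \<forall>f \<in> hom G integer_group. f h = n * f g"
proof -
  interpret group G by (rule assms(1))
  define D where "D = derived G (carrier G)"
  interpret normal D G unfolding D_def by (rule derived_self_is_normal)
  obtain x where x: "x \<in> carrier (G Mod D)" "carrier (G Mod D) = range (\<lambda>n::int. x [^]\<^bsub>G Mod D\<^esub> n)"
    using assms(2) group.cyclic_group[OF factorgroup_is_group]
    unfolding cyclic_abelianization_def D_def by blast
  obtain g where g: "g \<in> carrier G" "x = D #> g"
    using x(1) unfolding carrier_FactGroup by auto
  have "\<exists>n::int. \<forall>f \<in> hom G integer_group. f h = n * f g" if h: "h \<in> carrier G" for h
  proof -
    have "D #> h \<in> carrier (G Mod D)" using h by (auto simp: carrier_FactGroup)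
    then obtain n :: int where "D #> h = x [^]\<^bsub>G Mod D\<^esub> n" using x(2) by auto
    then have "D #> h = D #> (g [^] n)" using g FactGroup_int_pow by simp
    moreover have "h \<in> D #> h" by (rule rcos_self[OF h subgroup_axioms])
    ultimately obtain d where d: "d \<in> D" "h = d \<otimes> g [^] n" unfolding r_coset_def by auto
    have "f h = n * f g" if f: "f \<in> hom G integer_group" for f
    proof -
      have "f h = f d + f (g [^] n)" using d subset g(1) f by (simp add: hom_mult)
      also have "f d = 0"
        using hom_integer_group_derived_eq_0[OF assms(1) f] d(1) unfolding D_def by simp
      also have "f (g [^] n) = n * f g"
        using hom_int_pow[OF f g(1) assms(1) group_integer_group] by simp
      finally show ?thesis by simp
    qed
    then show ?thesis by blast
  qed
  with g(1) show thesis by (rule that)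
qed

lemma cyclic_abelianization_hom_integer_group_det:
  assumes "group G" and "cyclic_abelianization G"
    and "f1 \<in> hom G integer_group" "f2 \<in> hom G integer_group"
    and "h1 \<in> carrier G" "h2 \<in> carrier G"
  shows "f1 h1 * f2 h2 = f1 h2 * f2 h1"
proof -
  obtain g where "\<And>h. h \<in> carrier G \<Longrightarrow> \<exists>n::int. \<forall>f \<in> hom G integer_group. f h = n * f g"
    using cyclic_abelianization_hom_integer_group_multiple[OF assms(1,2)] by blast
  then obtain n1 n2 where "\<forall>f \<in> hom G integer_group. f h1 = n1 * f g"
    and "\<forall>f \<in> hom G integer_group. f h2 = n2 * f g"
    using assms(5,6) by meson
  with assms(3,4) have "f1 h1 = n1 * f1 g" "f2 h2 = n2 * f2 g" "f1 h2 = n2 * f1 g" "f2 h1 = n1 * f2 g"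
    by auto
  then show ?thesis by (simp add: ac_simps)
qed

section \<open>Characters of Artin groups\<close>

lemma word_weight_alt:
  "word_weight f (pos (alt u v k)) = int ((k + 1) div 2) * f u + int (k div 2) * f v"
proof (induction k)
  case (Suc k)
  have "alt u v (Suc k) = alt u v k @ [if even k then u else v]" by (simp add: alt_def)
  with Suc show ?case
    by (cases "even k") (auto simp: word_weight_pos algebra_simps elim!: evenE oddE)
qed (simp add: alt_def pos_def)

lemma word_weight_alt_eq_iff:
  "word_weight f (pos (alt u v k)) = word_weight f (pos (alt v u k)) \<longleftrightarrow> even k \<or> f u = f v"
proof (cases "even k")
  case True
  then have "(k + 1) div 2 = k div 2" by (auto elim!: evenE)
  with True show ?thesis by (simp add: word_weight_alt)
next
  case False
  then have "(k + 1) div 2 = k div 2 + 1" by (auto elim!: oddE)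
  with False show ?thesis by (simp add: word_weight_alt algebra_simps)
qed

lemma artin_rels_word_weight:
  assumes "\<And>u v k. u \<in> X \<Longrightarrow> v \<in> X \<Longrightarrow> u \<noteq> v \<Longrightarrow> m u v = enat k \<Longrightarrow> odd k \<Longrightarrow> f u = f v"
  shows "\<forall>(l, r) \<in> artin_rels X m. word_weight f l = word_weight f r"
  by (clarsimp simp: artin_rels_def word_weight_alt_eq_iff) (use assms in blast)

lemma art_elt_single: "art_elt X m [x] = cls X (artin_rels X m) [(x, False)]"
  by (simp add: art_elt_def pos_def)

lemma hom_artin_group_art_elt:
  assumes "\<chi> \<in> hom (artin_group X m) integer_group" and "set xs \<subseteq> X"
  shows "\<chi> (art_elt X m xs) = word_weight (\<lambda>x. \<chi> (art_elt X m [x])) (pos xs)"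
  using assms hom_integer_group_pres_group_cls[of \<chi> X "artin_rels X m" "pos xs"]
  by (auto simp: artin_group_def art_elt_def art_elt_single pos_def)

lemma hom_artin_group_odd_label_eq:
  assumes \<chi>: "\<chi> \<in> hom (artin_group X m) integer_group"
    and uv: "u \<in> X" "v \<in> X" "u \<noteq> v" "m u v = enat k" "odd k"
  shows "\<chi> (art_elt X m [u]) = \<chi> (art_elt X m [v])"
proof -
  have "(pos (alt u v k), pos (alt v u k)) \<in> artin_rels X m"
    using uv unfolding artin_rels_def by blast
  then have "pres_rel X (artin_rels X m) ([] @ pos (alt u v k) @ []) ([] @ pos (alt v u k) @ [])"
    by (rule pres_rel.rel)
  then have "art_elt X m (alt u v k) = art_elt X m (alt v u k)"
    by (simp add: art_elt_def cls_eq_iff)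
  moreover have "set (alt u v k) \<subseteq> X" "set (alt v u k) \<subseteq> X"
    using uv by (auto simp: alt_def)
  ultimately have "word_weight (\<lambda>x. \<chi> (art_elt X m [x])) (pos (alt u v k))
      = word_weight (\<lambda>x. \<chi> (art_elt X m [x])) (pos (alt v u k))"
    using hom_artin_group_art_elt[OF \<chi>] by metis
  with uv(5) show ?thesis by (simp add: word_weight_alt_eq_iff)
qed

lemma hom_artin_group_generators_eq:
  assumes \<chi>: "\<chi> \<in> hom (artin_group X m) integer_group"
    and cyc: "cyclic_abelianization (artin_group X m)"
    and u: "u \<in> X" and v: "v \<in> X"
  shows "\<chi> (art_elt X m [u]) = \<chi> (art_elt X m [v])"
proof (rule ccontr)
  let ?R = "artin_rels X m"
  define c where "c x = \<chi> (art_elt X m [x])" for x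
  assume "c u \<noteq> c v"
  define level where "level x = (if c x = c u then 1 else 0 :: int)" for x
  define exp_sum where "exp_sum (x :: 'a) = (1 :: int)" for x
  have "\<forall>(l, r) \<in> ?R. word_weight level l = word_weight level r"
    by (rule artin_rels_word_weight)
      (auto simp: level_def c_def dest: hom_artin_group_odd_label_eq[OF \<chi>])
  then have level_hom: "weight_hom level \<in> hom (artin_group X m) integer_group"
    and level_gen: "\<And>x. weight_hom level (art_elt X m [x]) = level x"
    by (simp_all add: artin_group_def weight_hom_in_hom weight_hom_cls art_elt_single)
  have "\<forall>(l, r) \<in> ?R. word_weight exp_sum l = word_weight exp_sum r"
    by (rule artin_rels_word_weight) (simp add: exp_sum_def)
  then have exp_sum_hom: "weight_hom exp_sum \<in> hom (artin_group X m) integer_group"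
    and exp_sum_gen: "\<And>x. weight_hom exp_sum (art_elt X m [x]) = 1"
    by (simp_all add: artin_group_def weight_hom_in_hom weight_hom_cls art_elt_single exp_sum_def)
  have "art_elt X m [x] \<in> carrier (artin_group X m)" if "x \<in> X" for x
    using that by (auto simp: artin_group_def art_elt_single intro: cls_in_carrier_pres_group)
  then have "level u * 1 = level v * 1"
    using cyclic_abelianization_hom_integer_group_det[OF _ cyc level_hom exp_sum_hom, of "art_elt X m [u]"
        "art_elt X m [v]"] u v
    by (simp add: artin_group_def group_pres_group level_gen exp_sum_gen)
  with \<open>c u \<noteq> c v\<close> show False by (simp add: level_def)
qed

section \<open>Coxeter length and the constant coefficient of chi_T\<close>

lemma pres_rel_coxeter_rels_pos:
  assumes "set w \<subseteq> X \<times> UNIV"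
  shows "pres_rel X (coxeter_rels X m) w (pos (map fst w))"
  using assms
proof (induction w)
  case Nil
  then show ?case by (simp add: pos_def pres_rel.refl)
next
  case (Cons a w)
  let ?R = "coxeter_rels X m"
  obtain x b where a: "a = (x, b)" by (cases a)
  have x: "x \<in> X" using Cons.prems a by auto
  have letter: "pres_rel X ?R [(x, b)] [(x, False)]"
  proof (cases b)
    case True
    have "(pos [x, x], []) \<in> ?R" using x by (auto simp: coxeter_rels_def)
    then have "pres_rel X ?R ([(x, True)] @ [] @ []) ([(x, True)] @ pos [x, x] @ [])"
      by (rule pres_rel.sym[OF pres_rel.rel])
    moreover have "pres_rel X ?R ([] @ [(x, True), (x, \<not> True)] @ [(x, False)]) ([] @ [(x, False)])"
      by (rule pres_rel.cancel[OF x])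
    ultimately show ?thesis using True by (simp add: pos_def pres_rel.trans)
  qed (simp add: pres_rel.refl)
  have "pres_rel X ?R ([] @ [(x, b)] @ w) ([] @ [(x, False)] @ w)"
    by (rule pres_rel_append_cong[OF letter])
  moreover have "pres_rel X ?R ([(x, False)] @ w @ []) ([(x, False)] @ pos (map fst w) @ [])"
    using Cons by (intro pres_rel_append_cong) auto
  ultimately show ?case using a by (simp add: pos_def pres_rel.trans)
qed

lemma coxeter_group_carrier_cox_elt:
  assumes "w \<in> carrier (coxeter_group X m)"
  obtains xs where "set xs \<subseteq> X" "cox_elt X m xs = w"
proof -
  obtain ws where ws: "set ws \<subseteq> X \<times> UNIV" "w = cls X (coxeter_rels X m) ws"
    using assms by (auto simp: coxeter_group_def carrier_pres_group)
  then have "cox_elt X m (map fst ws) = w"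
    using pres_rel_coxeter_rels_pos[OF ws(1)] by (simp add: cox_elt_def cls_eq_iff pres_rel.sym)
  with ws(1) show thesis by (intro that) auto
qed

lemma reduced_expr_some:
  assumes "w \<in> carrier (coxeter_group X m)"
  shows "reduced_expr X m w (SOME xs. reduced_expr X m w xs)"
proof -
  obtain xs where "set xs \<subseteq> X" "cox_elt X m xs = w"
    using coxeter_group_carrier_cox_elt[OF assms] .
  then have "\<exists>n xs. set xs \<subseteq> X \<and> length xs = n \<and> cox_elt X m xs = w" by blast
  from LeastI_ex[OF this] obtain xs where "reduced_expr X m w xs"
    unfolding reduced_expr_def cox_len_def by blast
  then show ?thesis by (rule someI)
qed

lemma cox_len_eq_0_iff:
  assumes "w \<in> carrier (coxeter_group X m)"
  shows "cox_len X m w = 0 \<longleftrightarrow> w = \<one>\<^bsub>coxeter_group X m\<^esub>"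
proof
  assume "cox_len X m w = 0"
  then show "w = \<one>\<^bsub>coxeter_group X m\<^esub>"
    using reduced_expr_some[OF assms]
    by (auto simp: reduced_expr_def cox_elt_def coxeter_group_def pres_group_one pos_def)
next
  assume "w = \<one>\<^bsub>coxeter_group X m\<^esub>"
  then have "cox_elt X m [] = w"
    by (simp add: cox_elt_def coxeter_group_def pres_group_one pos_def)
  then show "cox_len X m w = 0"
    unfolding cox_len_def by (intro Least_eq_0 exI[of _ "[]"]) simp
qed

lemma one_in_min_coset_reps: "\<one>\<^bsub>coxeter_group X m\<^esub> \<in> min_coset_reps X m Y"
proof -
  have "\<one>\<^bsub>coxeter_group X m\<^esub> \<in> carrier (coxeter_group X m)"
    by (simp add: coxeter_group_def pres_group_one cls_in_carrier_pres_group)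
  moreover from this have "cox_len X m \<one>\<^bsub>coxeter_group X m\<^esub> = 0"
    by (simp add: cox_len_eq_0_iff)
  ultimately show ?thesis by (simp add: min_coset_reps_def)
qed

lemma hom_artin_lift:
  assumes \<chi>: "\<chi> \<in> hom (artin_group X m) integer_group"
    and gen: "\<And>x. x \<in> X \<Longrightarrow> \<chi> (art_elt X m [x]) = c"
    and w: "w \<in> carrier (coxeter_group X m)"
  shows "\<chi> (artin_lift X m w) = c * int (cox_len X m w)"
proof -
  define xs where "xs = (SOME xs. reduced_expr X m w xs)"
  have xs: "set xs \<subseteq> X" "length xs = cox_len X m w"
    using reduced_expr_some[OF w] by (simp_all add: xs_def reduced_expr_def)
  have "\<chi> (art_elt X m xs) = (\<Sum>x\<leftarrow>xs. \<chi> (art_elt X m [x]))"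
    using hom_artin_group_art_elt[OF \<chi> xs(1)] by (simp add: word_weight_pos)
  also have "\<dots> = (\<Sum>x\<leftarrow>xs. c)"
    using xs(1) gen by (intro arg_cong[of _ _ sum_list] map_cong) auto
  finally show ?thesis
    using xs(2) by (simp add: artin_lift_def xs_def[symmetric] sum_list_triv)
qed

lemma fls_nth_sign_X_intpow_0:
  "fls_nth ((-1) ^ k * fls_X_intpow i :: 'f::field fls) 0 = (if i = 0 then (-1) ^ k else 0)"
  by (cases "even k") simp_all

lemma fls_nth_chi_T_0:
  assumes "spherical X m"
    and \<chi>: "\<chi> \<in> hom (artin_group X m) integer_group"
    and gen: "\<And>x. x \<in> X \<Longrightarrow> \<chi> (art_elt X m [x]) = c" and "c \<noteq> 0"
  shows "fls_nth (chi_T X m Y \<chi> :: 'f::field fls) 0 = 1"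
proof -
  let ?W = "coxeter_group X m" and ?M = "min_coset_reps X m Y"
  have M: "?M \<subseteq> carrier ?W" by (auto simp: min_coset_reps_def)
  then have "finite ?M"
    using assms(1) unfolding spherical_def by (rule finite_subset)
  have "fls_nth ((-1) ^ cox_len X m w * fls_X_intpow (\<chi> (artin_lift X m w)) :: 'f fls) 0
      = (if w = \<one>\<^bsub>?W\<^esub> then 1 else 0)" if "w \<in> ?M" for w
  proof -
    have "w \<in> carrier ?W" using that M by blast
    then show ?thesis
      using cox_len_eq_0_iff[of w X m] \<open>c \<noteq> 0\<close>
      by (cases "w = \<one>\<^bsub>?W\<^esub>") (simp_all add: fls_nth_sign_X_intpow_0 hom_artin_lift[OF \<chi> gen])
  qed
  then have "fls_nth (chi_T X m Y \<chi> :: 'f fls) 0 = (\<Sum>w \<in> ?M. if w = \<one>\<^bsub>?W\<^esub> then 1 else 0)"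
    unfolding chi_T_def fls_nth_sum by (rule sum.cong[OF HOL.refl])
  also have "\<dots> = 1"
    using \<open>finite ?M\<close> one_in_min_coset_reps by simp
  finally show ?thesis .
qed

theorem lemma6p3:
  fixes X :: "'a set" and m :: "'a \<Rightarrow> 'a \<Rightarrow> enat"
    and \<chi> :: "'a word set \<Rightarrow> int"
  assumes "finite X"
    and "coxeter_matrix X m"
    and "spherical X m"
    and "irreducible X m"
    and "cyclic_abelianization (artin_group X m)"
    and "\<chi> \<in> hom (artin_group X m) integer_group"
    and "\<exists>g \<in> carrier (artin_group X m). \<chi> g \<noteq> 0"
  shows "\<forall>v \<in> X. (chi_T X m (X - {v}) \<chi> :: 'f::field fls) \<noteq> 0"
proof
  fix v assume v: "v \<in> X"
  define c where "c = \<chi> (art_elt X m [v])"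
  have gen: "\<chi> (art_elt X m [x]) = c" if "x \<in> X" for x
    unfolding c_def using hom_artin_group_generators_eq[OF assms(6,5) that v] .
  have "c \<noteq> 0"
  proof
    assume "c = 0"
    then have "\<chi> g = 0" if "g \<in> carrier (artin_group X m)" for g
      using hom_integer_group_pres_group_eq_0[of \<chi> X "artin_rels X m" g] assms(6) gen that
      by (simp add: artin_group_def art_elt_single)
    with assms(7) show False by blast
  qed
  with fls_nth_chi_T_0[OF assms(3,6) gen] show "(chi_T X m (X - {v}) \<chi> :: 'f fls) \<noteq> 0"
    by (metis fls_zero_nth one_neq_zero)
qed

end
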